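(* Let $\mathcal{H}$ be a Hilbert space of finite dimension $N$, and let $\rho,\sigma$ be density operators on $\mathcal{H}$ with the same spectrum, where $\rho$ is not the maximally mixed state $\mathbb{1}/N$. Let $T>0$, let $t\mapsto H_t$ ($t\in[0,T]$) be a (time-dependent) Hamiltonian generating the unitary evolution $U_t$, and set $\rho_t=U_t\rho U_t^\dagger$, with $\rho_0=\rho$ and $\rho_T=\sigma$. Define $$\Theta(\rho,\sigma)=\arccos\left(\frac{\operatorname{tr}[\rho\sigma]-1/N}{\operatorname{tr}[\rho^2]-1/N}\right),\qquad Q_\Theta=\frac{1}{T}\int_0^T dt\,\sqrt{\frac{2\,\operatorname{tr}[\rho_t^2H_t^2-(\rho_tH_t)^2]}{\operatorname{tr}[\rho_t^2-\mathbb{1}/N^2]}}.$$ Then the evolution time satisfies $T\geq T_\Theta(\rho,\sigma):=\Theta(\rho,\sigma)/Q_\Theta$; i.e., the minimal time required to evolve $\rho$ to $\sigma$ by a unitary generated by $H_t$ is bounded from below by $T_\Theta(\rho,\sigma)$.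
   Context: Units with $\hbar=1$. $\Theta(\rho,\sigma)$ equals the angle $\arccos(\hat{\bm r}\cdot\hat{\bm s})$ between the generalized Bloch vectors $\bm r,\bm s$ of $\rho,\sigma$ (defined by $\rho=\frac1N(\mathbb{1}+\sqrt{N(N-1)/2}\,\bm r\cdot\bm A)$ for a basis $\bm A=(A_1,\dots,A_{N^2-1})$ of the Lie algebra of $SU(N)$ with $\operatorname{tr}[A_iA_j]=2\delta_{ij}$), normalized to unit length; states with equal spectra have Bloch vectors of equal length. The unitary $U_t$ solves $i\,\partial_t U_t=H_tU_t$, $U_0=\mathbb{1}$. *)

theory Defs
  imports "HOL-Analysis.Analysis" "Jordan_Normal_Form.Char_Poly"
begin

definition mtrace :: "complex mat \<Rightarrow> complex" where
  "mtrace A = (\<Sum>i<dim_row A. A $$ (i,i))"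

definition dagger :: "complex mat \<Rightarrow> complex mat" where
  "dagger A = mat (dim_col A) (dim_row A) (\<lambda>(i,j). cnj (A $$ (j,i)))"

definition hermitian :: "nat \<Rightarrow> complex mat \<Rightarrow> bool" where
  "hermitian N A \<longleftrightarrow> A \<in> carrier_mat N N \<and> dagger A = A"

definition psd :: "nat \<Rightarrow> complex mat \<Rightarrow> bool" where
  "psd N A \<longleftrightarrow> A \<in> carrier_mat N N \<and>
     (\<forall>x :: nat \<Rightarrow> complex.
        let q = (\<Sum>i<N. \<Sum>j<N. cnj (x i) * A $$ (i,j) * x j) in q \<in> \<real> \<and> 0 \<le> Re q)"

definition density_op :: "nat \<Rightarrow> complex mat \<Rightarrow> bool" where
  "density_op N \<rho> \<longleftrightarrow> hermitian N \<rho> \<and> psd N \<rho> \<and> mtrace \<rho> = 1"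

text \<open>Same spectrum (eigenvalues with multiplicities) = same characteristic polynomial.\<close>
definition same_spectrum :: "complex mat \<Rightarrow> complex mat \<Rightarrow> bool" where
  "same_spectrum A B \<longleftrightarrow> char_poly A = char_poly B"

definition Theta :: "nat \<Rightarrow> complex mat \<Rightarrow> complex mat \<Rightarrow> real" where
  "Theta N \<rho> \<sigma> = arccos ((Re (mtrace (\<rho> * \<sigma>)) - 1 / real N) /
                              (Re (mtrace (\<rho> * \<rho>)) - 1 / real N))"

definition generates :: "nat \<Rightarrow> real \<Rightarrow> (real \<Rightarrow> complex mat) \<Rightarrow> (real \<Rightarrow> complex mat) \<Rightarrow> bool" where
  "generates N T H U \<longleftrightarrow> U 0 = 1\<^sub>m N \<and>
     (\<forall>t\<in>{0..T}. U t \<in> carrier_mat N N \<and>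
        (\<forall>i<N. \<forall>j<N. ((\<lambda>s. U s $$ (i,j)) has_vector_derivative
                        (- \<i> * ((H t * U t) $$ (i,j)))) (at t within {0..T})))"

definition QTheta :: "nat \<Rightarrow> real \<Rightarrow> (real \<Rightarrow> complex mat) \<Rightarrow> (real \<Rightarrow> complex mat) \<Rightarrow> real" where
  "QTheta N T H \<rho>t = (1 / T) * integral {0..T} (\<lambda>t.
      sqrt (2 * Re (mtrace (\<rho>t t * \<rho>t t * H t * H t - (\<rho>t t * H t) * (\<rho>t t * H t)))
            / Re (mtrace (\<rho>t t * \<rho>t t - (1 / (of_nat N)^2) \<cdot>\<^sub>m 1\<^sub>m N))))"

end

theory Submission
  imports Defs
begin

(* The Bloch vectors of the evolved states are the traceless parts X_t = \<rho>_t - 1/N. They all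
   have the same Hilbert-Schmidt length, because tr \<rho>_t^2 is invariant under unitary conjugation,
   and cos \<Theta>(\<rho>, \<rho>_t) = <X_0, X_t> / |X_0|^2. The velocity V_t = -i[H_t, \<rho>_t] is orthogonal to
   X_t, so only the component of X_0 orthogonal to X_t, of length |X_0| sin \<Theta>, sees it: by
   Cauchy-Schwarz the cosine changes at rate at most sin \<Theta> |V_t| / |X_0|. As |V_t|^2 / |X_0|^2 is
   the integrand of Q_\<Theta>, the angle grows at most at that rate, and integrating over [0, T]
   gives \<Theta>(\<rho>, \<sigma>) <= T Q_\<Theta>. *)

lemma index_mult_mat_sum:
  assumes "A \<in> carrier_mat n n" "B \<in> carrier_mat n n" "i < n" "j < n"
  shows "(A * B) $$ (i,j) = (\<Sum>k<n. A $$ (i,k) * B $$ (k,j))"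
  using assms by (simp add: scalar_prod_def atLeast0LessThan)

lemma mtrace_eq_sum: "A \<in> carrier_mat n n \<Longrightarrow> mtrace A = (\<Sum>i<n. A $$ (i,i))"
  by (simp add: mtrace_def)

lemma mtrace_mult_comm:
  assumes "A \<in> carrier_mat n n" "B \<in> carrier_mat n n"
  shows "mtrace (A * B) = mtrace (B * A)"
proof -
  have "mtrace (A * B) = (\<Sum>i<n. \<Sum>k<n. A $$ (i,k) * B $$ (k,i))"
    using assms by (auto simp: mtrace_def scalar_prod_def atLeast0LessThan intro!: sum.cong)
  also have "\<dots> = (\<Sum>k<n. \<Sum>i<n. B $$ (k,i) * A $$ (i,k))"
    by (subst sum.swap) (simp add: mult.commute)
  also have "\<dots> = mtrace (B * A)"
    using assms by (auto simp: mtrace_def scalar_prod_def atLeast0LessThan intro!: sum.cong)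
  finally show ?thesis .
qed

lemma mtrace_minus:
  "A \<in> carrier_mat n n \<Longrightarrow> B \<in> carrier_mat n n \<Longrightarrow> mtrace (A - B) = mtrace A - mtrace B"
  by (auto simp: mtrace_def sum_subtractf)

lemma mtrace_smult: "A \<in> carrier_mat n n \<Longrightarrow> mtrace (c \<cdot>\<^sub>m A) = c * mtrace A"
  by (auto simp: mtrace_def sum_distrib_left)

lemma mtrace_one_mat: "mtrace (1\<^sub>m n) = of_nat n"
  by (simp add: mtrace_def)

lemma dagger_carrier_mat [simp]: "A \<in> carrier_mat n m \<Longrightarrow> dagger A \<in> carrier_mat m n"
  by (simp add: dagger_def)

lemma dim_dagger [simp]: "dim_row (dagger A) = dim_col A" "dim_col (dagger A) = dim_row A"
  by (simp_all add: dagger_def)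

lemma index_dagger [simp]:
  "i < dim_col A \<Longrightarrow> j < dim_row A \<Longrightarrow> dagger A $$ (i,j) = cnj (A $$ (j,i))"
  by (simp add: dagger_def)

lemma dagger_mult:
  assumes "A \<in> carrier_mat n m" "B \<in> carrier_mat m k"
  shows "dagger (A * B) = dagger B * dagger A"
  using assms by (intro eq_matI) (auto simp: scalar_prod_def mult.commute)

lemma dagger_smult: "dagger (c \<cdot>\<^sub>m A) = cnj c \<cdot>\<^sub>m dagger A"
  by (intro eq_matI) auto

lemma dagger_one_mat [simp]: "dagger (1\<^sub>m n) = 1\<^sub>m n"
  by (intro eq_matI) auto

lemma dagger_minus:
  "A \<in> carrier_mat n m \<Longrightarrow> B \<in> carrier_mat n m \<Longrightarrow> dagger (A - B) = dagger A - dagger B"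
  by (intro eq_matI) auto

lemma dagger_dagger [simp]: "dagger (dagger A) = A"
  by (intro eq_matI) auto

lemma mtrace_commutator_square:
  fixes P H :: "complex mat"
  assumes P: "P \<in> carrier_mat n n" and H: "H \<in> carrier_mat n n"
  shows "mtrace ((H * P - P * H) * (H * P - P * H)) = - 2 * mtrace (P * P * H * H - (P * H) * (P * H))"
proof -
  have c: "H * P \<in> carrier_mat n n" "P * H \<in> carrier_mat n n" "P * P \<in> carrier_mat n n"
    "H * H \<in> carrier_mat n n" using P H by auto
  have expand: "(H * P - P * H) * (H * P - P * H)
      = (H * P) * (H * P) - (H * P) * (P * H) - ((P * H) * (H * P) - (P * H) * (P * H))"
    unfolding minus_mult_distrib_mat[OF c(1) c(2) minus_carrier_mat[OF c(2)]]
      mult_minus_distrib_mat[OF c(1) c(1) c(2)] mult_minus_distrib_mat[OF c(2) c(1) c(2)] ..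
  note assoc = assoc_mult_mat[of _ n n _ n _ n]
  have t1: "mtrace ((H * P) * (H * P)) = mtrace ((P * H) * (P * H))"
  proof -
    have "mtrace ((H * P) * (H * P)) = mtrace (H * (P * (H * P)))" by (simp only: assoc[OF H P c(1)])
    also have "\<dots> = mtrace ((P * (H * P)) * H)" using P H by (intro mtrace_mult_comm) auto
    also have "\<dots> = mtrace ((P * H) * (P * H))"
      by (simp only: assoc[OF P c(1) H] assoc[OF H P H] assoc[OF P H c(2)])
    finally show ?thesis .
  qed
  have t2: "mtrace ((H * P) * (P * H)) = mtrace (P * P * H * H)"
  proof -
    have "mtrace ((H * P) * (P * H)) = mtrace (H * (P * P * H))"
      by (simp only: assoc[OF H P c(2)] assoc[OF P P H])
    also have "\<dots> = mtrace ((P * P * H) * H)" using P H by (intro mtrace_mult_comm) auto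
    finally show ?thesis .
  qed
  have t3: "mtrace ((P * H) * (H * P)) = mtrace (P * P * H * H)"
  proof -
    have "mtrace ((P * H) * (H * P)) = mtrace (P * (H * H * P))"
      by (simp only: assoc[OF P H c(1)] assoc[OF H H P])
    also have "\<dots> = mtrace ((H * H * P) * P)" using P H by (intro mtrace_mult_comm) auto
    also have "\<dots> = mtrace ((H * H) * (P * P))" by (simp only: assoc[OF c(4) P P])
    also have "\<dots> = mtrace ((P * P) * (H * H))" using c by (intro mtrace_mult_comm) auto
    also have "\<dots> = mtrace (P * P * H * H)" by (simp only: assoc[OF c(3) H H])
    finally show ?thesis .
  qed
  have q: "H * P * (H * P) \<in> carrier_mat n n" "H * P * (P * H) \<in> carrier_mat n n"
    "P * H * (H * P) \<in> carrier_mat n n" "P * H * (P * H) \<in> carrier_mat n n"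
    "P * P * H * H \<in> carrier_mat n n" using c P H by auto
  show ?thesis
    unfolding expand using t1 t2 t3
    by (simp add: mtrace_minus[OF minus_carrier_mat[OF q(2)] minus_carrier_mat[OF q(4)]]
        mtrace_minus[OF q(1) q(2)] mtrace_minus[OF q(3) q(4)] mtrace_minus[OF q(5) q(4)])
qed

section \<open>The real Frobenius inner product\<close>

text \<open>The Hilbert-Schmidt inner product \<open>Re tr (A B\<^sup>*)\<close>, written entrywise so that
  Cauchy-Schwarz applies directly.\<close>
definition frob_inner :: "nat \<Rightarrow> complex mat \<Rightarrow> complex mat \<Rightarrow> real" where
  "frob_inner n A B =
     (\<Sum>i<n. \<Sum>k<n. Re (A $$ (i,k)) * Re (B $$ (i,k)) + Im (A $$ (i,k)) * Im (B $$ (i,k)))"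

lemma frob_inner_sym: "frob_inner n A B = frob_inner n B A"
  by (simp add: frob_inner_def mult.commute)

lemma frob_inner_self_nonneg: "0 \<le> frob_inner n A A"
  by (simp add: frob_inner_def sum_nonneg)

lemma frob_inner_minus_left:
  assumes "A \<in> carrier_mat n n" "B \<in> carrier_mat n n"
  shows "frob_inner n (A - B) C = frob_inner n A C - frob_inner n B C"
  unfolding frob_inner_def sum_subtractf[symmetric]
  using assms by (intro sum.cong refl) (auto simp: left_diff_distrib)

lemma frob_inner_scaleR_left:
  assumes "A \<in> carrier_mat n n"
  shows "frob_inner n (of_real k \<cdot>\<^sub>m A) C = k * frob_inner n A C"
  unfolding frob_inner_def sum_distrib_left
  using assms by (intro sum.cong refl) (auto simp: distrib_left)

lemma frob_inner_Cauchy_Schwarz: "(frob_inner n A B)\<^sup>2 \<le> frob_inner n A A * frob_inner n B B"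
proof -
  define J where "J = ({..<n} \<times> {..<n}) \<times> {..<2::nat}"
  define coord where "coord M = (\<lambda>((i,k),j). if j = (0::nat) then Re (M $$ (i,k)) else Im (M $$ (i,k)))"
    for M :: "complex mat"
  have eq: "frob_inner n M M' = (\<Sum>x\<in>J. coord M x * coord M' x)" for M M'
    by (simp add: J_def sum.cartesian_product' frob_inner_def coord_def numeral_2_eq_2)
  show ?thesis
    unfolding eq using Cauchy_Schwarz_ineq_sum[of "coord A" "coord B" J] by (simp add: power2_eq_square)
qed

lemma frob_inner_self_eq_0:
  assumes "A \<in> carrier_mat n n" "frob_inner n A A = 0"
  shows "A = 0\<^sub>m n n"
proof (rule eq_matI)
  fix i j assume ij: "i < dim_row (0\<^sub>m n n :: complex mat)" "j < dim_col (0\<^sub>m n n :: complex mat)"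
  have "\<forall>i\<in>{..<n}. (\<Sum>k<n. Re (A $$ (i,k)) * Re (A $$ (i,k)) + Im (A $$ (i,k)) * Im (A $$ (i,k))) = 0"
    using assms(2) unfolding frob_inner_def by (subst sum_nonneg_eq_0_iff[symmetric]) (auto intro: sum_nonneg)
  then have "Re (A $$ (i,j)) * Re (A $$ (i,j)) + Im (A $$ (i,j)) * Im (A $$ (i,j)) = 0"
    using ij by (subst (asm) sum_nonneg_eq_0_iff) auto
  then show "A $$ (i,j) = 0\<^sub>m n n $$ (i,j)"
    using ij by (simp add: complex_eq_iff add_nonneg_eq_0_iff)
qed (use assms in auto)

lemma frob_inner_eq_Re_mtrace:
  assumes A: "A \<in> carrier_mat n n" and B: "B \<in> carrier_mat n n" and "dagger B = B"
  shows "frob_inner n A B = Re (mtrace (A * B))"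
proof -
  have B_entry: "A $$ (i,k) * B $$ (k,i) = A $$ (i,k) * cnj (B $$ (i,k))" if "i < n" "k < n" for i k
  proof -
    have "B $$ (k,i) = dagger B $$ (k,i)" using \<open>dagger B = B\<close> by simp
    then show ?thesis using that B by simp
  qed
  have "mtrace (A * B) = (\<Sum>i<n. \<Sum>k<n. A $$ (i,k) * B $$ (k,i))"
    using A B by (auto simp: mtrace_def scalar_prod_def atLeast0LessThan intro!: sum.cong)
  also have "\<dots> = (\<Sum>i<n. \<Sum>k<n. A $$ (i,k) * cnj (B $$ (i,k)))"
    using B_entry by (auto intro!: sum.cong)
  finally show ?thesis by (simp add: frob_inner_def)
qed

text \<open>Only the part \<open>A - (a / r) B\<close> of \<open>A\<close> orthogonal to \<open>B\<close> pairs with \<open>D\<close>;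
  its squared norm is \<open>r - a\<^sup>2 / r\<close>.\<close>
lemma frob_inner_orthogonal_bound:
  assumes A: "A \<in> carrier_mat n n" and B: "B \<in> carrier_mat n n"
    and BD: "frob_inner n B D = 0" and AA: "frob_inner n A A = r" and BB: "frob_inner n B B = r"
    and AB: "frob_inner n A B = a" and r: "r > 0"
  shows "\<bar>frob_inner n A D\<bar> \<le> sqrt (r - a\<^sup>2 / r) * sqrt (frob_inner n D D)"
proof -
  define Y where "Y = A - of_real (a / r) \<cdot>\<^sub>m B"
  have inner_Y: "frob_inner n Y C = frob_inner n A C - a / r * frob_inner n B C" for C
    by (simp only: Y_def frob_inner_minus_left[OF A smult_carrier_mat[OF B]] frob_inner_scaleR_left[OF B])
  have "frob_inner n Y Y = frob_inner n Y A - a / r * frob_inner n Y B"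
    using inner_Y[of Y] frob_inner_sym by metis
  also have "\<dots> = r - a\<^sup>2 / r"
    using inner_Y[of A] inner_Y[of B] AA BB AB r frob_inner_sym[of n A B]
    by (simp add: field_simps power2_eq_square)
  finally have YY: "frob_inner n Y Y = r - a\<^sup>2 / r" .
  have "(frob_inner n A D)\<^sup>2 \<le> (r - a\<^sup>2 / r) * frob_inner n D D"
    using frob_inner_Cauchy_Schwarz[of n Y D] inner_Y[of D] BD YY by simp
  then show ?thesis
    using real_sqrt_le_mono by (fastforce simp: real_sqrt_mult)
qed

lemma frob_inner_traceless_states:
  fixes A B :: "complex mat"
  assumes A: "A \<in> carrier_mat n n" and B: "B \<in> carrier_mat n n"
    and "dagger A = A" "dagger B = B" "mtrace A = 1" "mtrace B = 1" and n: "n \<ge> 1"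
  shows "frob_inner n (A - of_real (1 / real n) \<cdot>\<^sub>m 1\<^sub>m n) (B - of_real (1 / real n) \<cdot>\<^sub>m 1\<^sub>m n)
           = Re (mtrace (A * B)) - 1 / real n"
proof -
  define c where "c = 1 / real n"
  have I: "(1\<^sub>m n :: complex mat) \<in> carrier_mat n n" by simp
  have cI: "of_real c \<cdot>\<^sub>m (1\<^sub>m n :: complex mat) \<in> carrier_mat n n" by simp
  have IA: "frob_inner n (1\<^sub>m n) A = 1" and BI: "frob_inner n B (1\<^sub>m n) = 1"
    and II: "frob_inner n (1\<^sub>m n) (1\<^sub>m n) = real n"
    using frob_inner_eq_Re_mtrace[OF I A] frob_inner_eq_Re_mtrace[OF B I] frob_inner_eq_Re_mtrace[OF I I]
      assms by (simp_all add: mtrace_one_mat)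
  have BA: "frob_inner n B A = Re (mtrace (A * B))"
    using frob_inner_eq_Re_mtrace[OF B A] mtrace_mult_comm[OF A B] assms by simp
  have shift: "frob_inner n (M - of_real c \<cdot>\<^sub>m 1\<^sub>m n) C = frob_inner n M C - c * frob_inner n (1\<^sub>m n) C"
    if "M \<in> carrier_mat n n" for M C
    by (simp only: frob_inner_minus_left[OF that cI] frob_inner_scaleR_left[OF I])
  have "frob_inner n (A - of_real c \<cdot>\<^sub>m 1\<^sub>m n) (B - of_real c \<cdot>\<^sub>m 1\<^sub>m n)
      = frob_inner n A (B - of_real c \<cdot>\<^sub>m 1\<^sub>m n) - c * frob_inner n (1\<^sub>m n) (B - of_real c \<cdot>\<^sub>m 1\<^sub>m n)"
    by (rule shift[OF A])
  also have "frob_inner n A (B - of_real c \<cdot>\<^sub>m 1\<^sub>m n) = frob_inner n B A - c * frob_inner n (1\<^sub>m n) A"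
    using shift[OF B, of A] frob_inner_sym by metis
  also have "frob_inner n (1\<^sub>m n) (B - of_real c \<cdot>\<^sub>m 1\<^sub>m n)
      = frob_inner n B (1\<^sub>m n) - c * frob_inner n (1\<^sub>m n) (1\<^sub>m n)"
    using shift[OF B, of "1\<^sub>m n"] frob_inner_sym by metis
  finally have "frob_inner n (A - of_real c \<cdot>\<^sub>m 1\<^sub>m n) (B - of_real c \<cdot>\<^sub>m 1\<^sub>m n)
      = Re (mtrace (A * B)) - c - c * (1 - c * real n)"
    using IA BI II BA by simp
  also have "\<dots> = Re (mtrace (A * B)) - c" using n unfolding c_def by (simp add: field_simps)
  finally show ?thesis unfolding c_def .
qed

lemma frob_inner_shift_traceless:
  assumes A: "A \<in> carrier_mat n n" and D: "D \<in> carrier_mat n n"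
    and "dagger D = D" "mtrace D = 0"
  shows "frob_inner n (A - of_real c \<cdot>\<^sub>m 1\<^sub>m n) D = Re (mtrace (A * D))"
  using frob_inner_eq_Re_mtrace[OF A D] frob_inner_eq_Re_mtrace[of "1\<^sub>m n" n D] assms
  by (simp add: frob_inner_minus_left frob_inner_scaleR_left)

lemma purity_gt_maximally_mixed:
  assumes "hermitian n \<rho>" "mtrace \<rho> = 1" "n \<ge> 1" "\<rho> \<noteq> (1 / of_nat n) \<cdot>\<^sub>m 1\<^sub>m n"
  shows "Re (mtrace (\<rho> * \<rho>)) - 1 / real n > 0"
proof -
  define X where "X = \<rho> - of_real (1 / real n) \<cdot>\<^sub>m 1\<^sub>m n"
  have \<rho>: "\<rho> \<in> carrier_mat n n" "dagger \<rho> = \<rho>" using assms(1) by (auto simp: hermitian_def)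
  have X: "X \<in> carrier_mat n n" by (simp add: X_def minus_carrier_mat)
  have XX: "frob_inner n X X = Re (mtrace (\<rho> * \<rho>)) - 1 / real n"
    unfolding X_def using frob_inner_traceless_states[OF \<rho>(1) \<rho>(1) \<rho>(2) \<rho>(2)] assms by simp
  have "X \<noteq> 0\<^sub>m n n"
  proof
    assume "X = 0\<^sub>m n n"
    have "\<rho> = (1 / of_nat n) \<cdot>\<^sub>m 1\<^sub>m n"
    proof (rule eq_matI)
      fix i j assume "i < dim_row ((1 / of_nat n :: complex) \<cdot>\<^sub>m 1\<^sub>m n)"
        "j < dim_col ((1 / of_nat n :: complex) \<cdot>\<^sub>m 1\<^sub>m n)"
      then have ij: "i < n" "j < n" by auto
      have "(\<rho> - of_real (1 / real n) \<cdot>\<^sub>m 1\<^sub>m n) $$ (i,j) = 0"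
        using \<open>X = 0\<^sub>m n n\<close> ij unfolding X_def by simp
      then show "\<rho> $$ (i,j) = ((1 / of_nat n) \<cdot>\<^sub>m 1\<^sub>m n) $$ (i,j)" using ij \<rho>(1) by simp
    qed (use \<rho>(1) in auto)
    then show False using assms(4) by simp
  qed
  then have "frob_inner n X X \<noteq> 0" using frob_inner_self_eq_0[OF X] by blast
  then show ?thesis using XX frob_inner_self_nonneg[of n X] by linarith
qed

section \<open>Matrix-valued functions of time\<close>

definition mat_has_derivative ::
    "nat \<Rightarrow> real set \<Rightarrow> (real \<Rightarrow> complex mat) \<Rightarrow> complex mat \<Rightarrow> real \<Rightarrow> bool" where
  "mat_has_derivative n S A A' t \<longleftrightarrow>
     (\<forall>i<n. \<forall>j<n. ((\<lambda>s. A s $$ (i,j)) has_vector_derivative A' $$ (i,j)) (at t within S))"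

definition mat_continuous_on :: "nat \<Rightarrow> real set \<Rightarrow> (real \<Rightarrow> complex mat) \<Rightarrow> bool" where
  "mat_continuous_on n S A \<longleftrightarrow> (\<forall>i<n. \<forall>j<n. continuous_on S (\<lambda>t. A t $$ (i,j)))"

lemma mat_has_derivative_const: "mat_has_derivative n S (\<lambda>s. C) (0\<^sub>m n n) t"
  by (simp add: mat_has_derivative_def)

lemma mat_has_derivative_mult:
  assumes A: "\<forall>s\<in>S. A s \<in> carrier_mat n n" and B: "\<forall>s\<in>S. B s \<in> carrier_mat n n"
    and A': "A' \<in> carrier_mat n n" and B': "B' \<in> carrier_mat n n" and t: "t \<in> S"
    and dA: "mat_has_derivative n S A A' t" and dB: "mat_has_derivative n S B B' t"
  shows "mat_has_derivative n S (\<lambda>s. A s * B s) (A' * B t + A t * B') t"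
  unfolding mat_has_derivative_def
proof (intro allI impI)
  fix i j assume ij: "i < n" "j < n"
  have d: "((\<lambda>s. \<Sum>k<n. A s $$ (i,k) * B s $$ (k,j)) has_vector_derivative
          (\<Sum>k<n. A t $$ (i,k) * B' $$ (k,j) + A' $$ (i,k) * B t $$ (k,j))) (at t within S)"
    using dA dB ij unfolding mat_has_derivative_def
    by (intro has_vector_derivative_sum has_vector_derivative_mult) auto
  have "A t \<in> carrier_mat n n" "B t \<in> carrier_mat n n" using A B t by auto
  then have e: "(\<Sum>k<n. A t $$ (i,k) * B' $$ (k,j) + A' $$ (i,k) * B t $$ (k,j))
      = (A' * B t + A t * B') $$ (i,j)"
    using A' B' ij by (simp add: scalar_prod_def atLeast0LessThan sum.distrib add.commute)
  show "((\<lambda>s. (A s * B s) $$ (i,j)) has_vector_derivative (A' * B t + A t * B') $$ (i,j))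
      (at t within S)"
    unfolding e[symmetric]
    by (rule has_vector_derivative_transform_within[OF d, where d=1])
       (use A B ij t in \<open>auto simp: index_mult_mat_sum\<close>)
qed

lemma mat_has_derivative_dagger:
  assumes A: "\<forall>s\<in>S. A s \<in> carrier_mat n n" and A': "A' \<in> carrier_mat n n" and t: "t \<in> S"
    and dA: "mat_has_derivative n S A A' t"
  shows "mat_has_derivative n S (\<lambda>s. dagger (A s)) (dagger A') t"
  unfolding mat_has_derivative_def
proof (intro allI impI)
  fix i j assume ij: "i < n" "j < n"
  have d: "((\<lambda>s. cnj (A s $$ (j,i))) has_vector_derivative cnj (A' $$ (j,i))) (at t within S)"
    using dA ij unfolding mat_has_derivative_def by (intro has_vector_derivative_cnj) auto
  have e: "dagger A' $$ (i,j) = cnj (A' $$ (j,i))" using A' ij by simp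
  show "((\<lambda>s. dagger (A s) $$ (i,j)) has_vector_derivative dagger A' $$ (i,j)) (at t within S)"
    unfolding e by (rule has_vector_derivative_transform_within[OF d, where d=1]) (use A ij t in auto)
qed

lemma mtrace_has_vector_derivative:
  assumes A: "\<forall>s\<in>S. A s \<in> carrier_mat n n" and A': "A' \<in> carrier_mat n n" and t: "t \<in> S"
    and dA: "mat_has_derivative n S A A' t"
  shows "((\<lambda>s. mtrace (A s)) has_vector_derivative mtrace A') (at t within S)"
proof -
  have d: "((\<lambda>s. \<Sum>i<n. A s $$ (i,i)) has_vector_derivative (\<Sum>i<n. A' $$ (i,i))) (at t within S)"
    using dA unfolding mat_has_derivative_def by (intro has_vector_derivative_sum) auto
  show ?thesis unfolding mtrace_eq_sum[OF A']
    by (rule has_vector_derivative_transform_within[OF d, where d=1])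
       (use A t in \<open>auto simp: mtrace_eq_sum\<close>)
qed

lemma mat_has_derivative_zero_constant:
  assumes "convex S" "\<forall>t\<in>S. mat_has_derivative n S A (0\<^sub>m n n) t" "t \<in> S" "s \<in> S" "i < n" "j < n"
  shows "A t $$ (i,j) = A s $$ (i,j)"
proof -
  have "((\<lambda>s. A s $$ (i,j)) has_vector_derivative 0) (at x within S)" if "x \<in> S" for x
    using assms that unfolding mat_has_derivative_def by fastforce
  then obtain c where "\<And>x. x \<in> S \<Longrightarrow> A x $$ (i,j) = c"
    using has_vector_derivative_zero_constant[OF assms(1)] by blast
  then show ?thesis using assms by simp
qed

lemma mat_has_derivative_imp_continuous_on:
  assumes "\<forall>t\<in>S. mat_has_derivative n S A (A' t) t"
  shows "mat_continuous_on n S A"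
  unfolding mat_continuous_on_def
proof (intro allI impI)
  fix i j assume "i < n" "j < n"
  then show "continuous_on S (\<lambda>t. A t $$ (i,j))"
    using assms unfolding mat_has_derivative_def by (intro continuous_on_vector_derivative) auto
qed

lemma mat_continuous_on_mult:
  assumes A: "\<forall>s\<in>S. A s \<in> carrier_mat n n" and B: "\<forall>s\<in>S. B s \<in> carrier_mat n n"
    and "mat_continuous_on n S A" "mat_continuous_on n S B"
  shows "mat_continuous_on n S (\<lambda>s. A s * B s)"
  unfolding mat_continuous_on_def
proof (intro allI impI)
  fix i j assume ij: "i < n" "j < n"
  have "continuous_on S (\<lambda>s. \<Sum>k<n. A s $$ (i,k) * B s $$ (k,j))"
    using assms(3,4) ij unfolding mat_continuous_on_def by (intro continuous_intros) auto
  then show "continuous_on S (\<lambda>s. (A s * B s) $$ (i,j))"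
    by (rule continuous_on_cong[THEN iffD1, rotated 2]) (use A B ij in \<open>auto simp: index_mult_mat_sum\<close>)
qed

lemma mat_continuous_on_minus:
  assumes B: "\<forall>s\<in>S. B s \<in> carrier_mat n n" and "mat_continuous_on n S A" "mat_continuous_on n S B"
  shows "mat_continuous_on n S (\<lambda>s. A s - B s)"
  unfolding mat_continuous_on_def
proof (intro allI impI)
  fix i j assume ij: "i < n" "j < n"
  have "continuous_on S (\<lambda>s. A s $$ (i,j) - B s $$ (i,j))"
    using assms(2,3) ij unfolding mat_continuous_on_def by (intro continuous_intros) auto
  then show "continuous_on S (\<lambda>s. (A s - B s) $$ (i,j))"
    by (rule continuous_on_cong[THEN iffD1, rotated 2]) (use B ij in auto)
qed

lemma mat_continuous_on_smult:
  assumes A: "\<forall>s\<in>S. A s \<in> carrier_mat n n" and "mat_continuous_on n S A"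
  shows "mat_continuous_on n S (\<lambda>s. c \<cdot>\<^sub>m A s)"
  unfolding mat_continuous_on_def
proof (intro allI impI)
  fix i j assume ij: "i < n" "j < n"
  have "continuous_on S (\<lambda>s. c * A s $$ (i,j))"
    using assms(2) ij unfolding mat_continuous_on_def by (intro continuous_intros) auto
  then show "continuous_on S (\<lambda>s. (c \<cdot>\<^sub>m A s) $$ (i,j))"
    by (rule continuous_on_cong[THEN iffD1, rotated 2]) (use A ij in auto)
qed

lemma continuous_on_frob_inner_self:
  "mat_continuous_on n S A \<Longrightarrow> continuous_on S (\<lambda>s. frob_inner n (A s) (A s))"
  unfolding frob_inner_def mat_continuous_on_def by (intro continuous_intros) auto

section \<open>Integrating the speed of an angle\<close>

lemma arccos_le_integral_interior:
  fixes g g' f :: "real \<Rightarrow> real"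
  assumes ab: "a \<le> b" and f: "continuous_on {a..b} f" and g: "continuous_on {a..b} g"
    and g': "\<And>t. a < t \<Longrightarrow> t < b \<Longrightarrow> (g has_real_derivative g' t) (at t)"
    and g_interior: "\<And>t. a < t \<Longrightarrow> t < b \<Longrightarrow> \<bar>g t\<bar> < 1"
    and ga: "g a = 1" and gb: "\<bar>g b\<bar> \<le> 1"
    and bound: "\<And>t. a < t \<Longrightarrow> t < b \<Longrightarrow> \<bar>g' t\<bar> \<le> sqrt (1 - (g t)\<^sup>2) * f t"
  shows "arccos (g b) \<le> integral {a..b} f"
proof -
  define F where "F t = arccos (g t) - integral {a..t} f" for t
  have "F b \<le> F a"
  proof (rule DERIV_nonpos_imp_decreasing_open[OF ab])
    fix x assume x: "a < x" "x < b"
    have x_interior: "x \<in> interior {a..b}" using x by simp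
    have d1: "((\<lambda>u. integral {a..u} f) has_real_derivative f x) (at x)"
      using integral_has_vector_derivative[OF f, of x] x
      by (simp add: has_real_derivative_iff_has_vector_derivative at_within_interior[OF x_interior])
    have gx: "-1 < g x" "g x < 1" using g_interior[OF x] by (simp_all add: abs_less_iff)
    have s: "sqrt (1 - (g x)\<^sup>2) > 0"
      using g_interior[OF x] by (simp add: abs_square_less_1)
    have d2: "((\<lambda>t. arccos (g t)) has_real_derivative inverse (- sqrt (1 - (g x)\<^sup>2)) * g' x) (at x)"
      using DERIV_chain2[OF DERIV_arccos g'[OF x]] gx by auto
    have "inverse (- sqrt (1 - (g x)\<^sup>2)) * g' x = - g' x / sqrt (1 - (g x)\<^sup>2)"
      by (simp add: field_simps)
    also have "\<dots> \<le> \<bar>g' x\<bar> / sqrt (1 - (g x)\<^sup>2)"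
      using s by (intro divide_right_mono) auto
    also have "\<dots> \<le> f x" using bound[OF x] s by (simp add: divide_le_eq mult.commute)
    finally show "\<exists>y. (F has_real_derivative y) (at x) \<and> y \<le> 0"
      unfolding F_def using DERIV_diff[OF d2 d1] by (intro exI conjI) auto
  next
    have "\<bar>g t\<bar> \<le> 1" if "t \<in> {a..b}" for t
      using that g_interior[of t] ga gb by (cases "t = a \<or> t = b") auto
    then have "g ` {a..b} \<subseteq> {-1..1}" by (auto simp: abs_le_iff)
    then have "continuous_on {a..b} (\<lambda>t. arccos (g t))"
      by (intro continuous_on_compose2[OF continuous_on_arccos' g]) auto
    moreover have "continuous_on {a..b} (\<lambda>t. integral {a..t} f)"
      by (rule indefinite_integral_continuous_1[OF integrable_continuous_real[OF f]])
    ultimately show "continuous_on {a..b} F" unfolding F_def by (rule continuous_on_diff)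
  qed
  then show ?thesis unfolding F_def using ga by simp
qed

text \<open>\<open>arccos\<close> is differentiable only on \<open>(-1, 1)\<close>: take \<open>s\<close> the last time with \<open>g = 1\<close>
  and \<open>u\<close> the first later time with \<open>g = -1\<close> (or \<open>b\<close>).\<close>
lemma arccos_segment_exists:
  fixes g :: "real \<Rightarrow> real"
  assumes ab: "a \<le> b" and g: "continuous_on {a..b} g" and g_bounded: "\<forall>t\<in>{a..b}. \<bar>g t\<bar> \<le> 1"
    and ga: "g a = 1"
  obtains s u where "a \<le> s" "s \<le> u" "u \<le> b" "g s = 1" "\<And>t. s < t \<Longrightarrow> t < u \<Longrightarrow> \<bar>g t\<bar> < 1"
    "arccos (g b) \<le> arccos (g u)"
proof -
  define S1 where "S1 = {t\<in>{a..b}. g t = 1}"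
  have "closed S1" unfolding S1_def by (rule continuous_closed_preimage_constant[OF g]) auto
  moreover have "S1 \<noteq> {}" "bdd_above S1" using ab ga unfolding S1_def by auto
  ultimately have s: "Sup S1 \<in> S1" by (rule closed_contains_Sup[rotated -1])
  have after_s: "g t \<noteq> 1" if "Sup S1 < t" "t \<le> b" for t
  proof
    assume "g t = 1"
    then have "t \<in> S1" using that s unfolding S1_def by auto
    then show False using cSup_upper[OF _ \<open>bdd_above S1\<close>, of t] that by simp
  qed
  define S2 where "S2 = {t\<in>{Sup S1..b}. g t = -1}"
  have in_segment: "\<bar>g t\<bar> < 1"
    if t: "Sup S1 < t" "t < u" "u \<le> b" and u: "\<forall>t'\<in>{Sup S1<..<u}. g t' \<noteq> -1" for t u
  proof -
    have "t \<in> {a..b}" using t s unfolding S1_def by auto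
    then have "\<bar>g t\<bar> \<le> 1" using g_bounded by blast
    moreover have "g t \<noteq> 1" using after_s t by simp
    moreover have "g t \<noteq> -1" using u t by simp
    ultimately show ?thesis by (cases "g t \<ge> 0") auto
  qed
  show ?thesis
  proof (cases "S2 = {}")
    case True
    show ?thesis
      by (rule that[of "Sup S1" b]) (use s True ab in \<open>auto simp: S1_def S2_def intro!: in_segment\<close>)
  next
    case False
    have "closed S2" unfolding S2_def
      by (rule continuous_closed_preimage_constant[OF continuous_on_subset[OF g]]) (use s S1_def in auto)
    moreover have "bdd_below S2" unfolding S2_def by auto
    ultimately have u: "Inf S2 \<in> S2" using False closed_contains_Inf by blast
    have "g t \<noteq> -1" if "Sup S1 < t" "t < Inf S2" for t
      using cInf_lower[OF _ \<open>bdd_below S2\<close>, of t] that u unfolding S2_def by force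
    moreover have "arccos (g b) \<le> arccos (g (Inf S2))"
      using u g_bounded ab arccos_ubound[of "g b"] unfolding S2_def by (auto simp: abs_le_iff)
    ultimately show ?thesis
      by (intro that[of "Sup S1" "Inf S2"]) (use s u in \<open>auto simp: S1_def S2_def intro!: in_segment\<close>)
  qed
qed

lemma arccos_le_integral:
  fixes g g' f :: "real \<Rightarrow> real"
  assumes ab: "a \<le> b" and f: "continuous_on {a..b} f" and f_nonneg: "\<forall>t\<in>{a..b}. 0 \<le> f t"
    and g': "\<forall>t\<in>{a..b}. (g has_real_derivative g' t) (at t within {a..b})"
    and g_bounded: "\<forall>t\<in>{a..b}. \<bar>g t\<bar> \<le> 1" and ga: "g a = 1"
    and bound: "\<forall>t\<in>{a..b}. \<bar>g' t\<bar> \<le> sqrt (1 - (g t)\<^sup>2) * f t"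
  shows "arccos (g b) \<le> integral {a..b} f"
proof -
  have g: "continuous_on {a..b} g"
    using g' by (auto simp: continuous_on_eq_continuous_within intro: DERIV_continuous)
  obtain s u where su: "a \<le> s" "s \<le> u" "u \<le> b" "g s = 1" "\<And>t. s < t \<Longrightarrow> t < u \<Longrightarrow> \<bar>g t\<bar> < 1"
    and arccos_b: "arccos (g b) \<le> arccos (g u)"
    using arccos_segment_exists[OF ab g g_bounded ga] by blast
  have sub: "{s..u} \<subseteq> {a..b}" using su by auto
  have "arccos (g u) \<le> integral {s..u} f"
  proof (rule arccos_le_integral_interior[OF su(2) continuous_on_subset[OF f sub]
        continuous_on_subset[OF g sub]])
    fix t assume t: "s < t" "t < u"
    then have "t \<in> interior {a..b}" using su by auto
    then show "(g has_real_derivative g' t) (at t)"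
      using g' interior_subset at_within_interior by fastforce
  qed (use su g_bounded bound in auto)
  also have "\<dots> \<le> integral {a..b} f"
    using f f_nonneg continuous_on_subset[OF f sub]
    by (intro integral_subset_le[OF sub integrable_continuous_real integrable_continuous_real]) auto
  finally show ?thesis using arccos_b by linarith
qed

section \<open>Unitary evolution generated by a Hamiltonian\<close>

locale hamiltonian_evolution =
  fixes N :: nat and T :: real and H U :: "real \<Rightarrow> complex mat"
  assumes hermitian_H: "\<forall>t\<in>{0..T}. hermitian N (H t)"
    and generates_U: "generates N T H U"
begin

lemma H_carrier: "t \<in> {0..T} \<Longrightarrow> H t \<in> carrier_mat N N"
  and dagger_H: "t \<in> {0..T} \<Longrightarrow> dagger (H t) = H t"
  using hermitian_H by (auto simp: hermitian_def)

lemma U_carrier: "t \<in> {0..T} \<Longrightarrow> U t \<in> carrier_mat N N"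
  and U_0: "U 0 = 1\<^sub>m N"
  using generates_U by (auto simp: generates_def)

lemma U_has_derivative:
  assumes t: "t \<in> {0..T}"
  shows "mat_has_derivative N {0..T} U ((- \<i>) \<cdot>\<^sub>m (H t * U t)) t"
proof -
  have HU: "H t * U t \<in> carrier_mat N N" using H_carrier[OF t] U_carrier[OF t] by simp
  have "((\<lambda>s. U s $$ (i,j)) has_vector_derivative (- \<i> * ((H t * U t) $$ (i,j)))) (at t within {0..T})"
    if "i < N" "j < N" for i j
    using generates_U t that unfolding generates_def by blast
  moreover have "(- \<i> \<cdot>\<^sub>m (H t * U t)) $$ (i,j) = - \<i> * ((H t * U t) $$ (i,j))"
    if "i < N" "j < N" for i j
    using HU that by (metis carrier_matD index_smult_mat(1))
  ultimately show ?thesis unfolding mat_has_derivative_def by presburger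
qed

lemma U_unitary:
  assumes t: "t \<in> {0..T}"
  shows "dagger (U t) * U t = 1\<^sub>m N"
proof -
  define U' where "U' s = (- \<i>) \<cdot>\<^sub>m (H s * U s)" for s
  have U': "U' s \<in> carrier_mat N N" if "s \<in> {0..T}" for s
    using H_carrier[OF that] U_carrier[OF that] by (simp add: U'_def)
  have U_carriers: "\<forall>s\<in>{0..T}. U s \<in> carrier_mat N N" "\<forall>s\<in>{0..T}. dagger (U s) \<in> carrier_mat N N"
    using U_carrier by auto
  have "mat_has_derivative N {0..T} (\<lambda>s. dagger (U s) * U s) (0\<^sub>m N N) s" if s: "s \<in> {0..T}" for s
  proof -
    note dU = U_has_derivative[OF s, folded U'_def]
    have "mat_has_derivative N {0..T} (\<lambda>s. dagger (U s) * U s)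
        (dagger (U' s) * U s + dagger (U s) * U' s) s"
      by (rule mat_has_derivative_mult[OF U_carriers(2,1) _ U'[OF s] s
            mat_has_derivative_dagger[OF U_carriers(1) U'[OF s] s dU] dU])
        (use U'[OF s] in simp)
    moreover have "dagger (U' s) * U s + dagger (U s) * U' s = 0\<^sub>m N N"
    proof -
      have c: "dagger (U s) * H s \<in> carrier_mat N N" "H s * U s \<in> carrier_mat N N"
        "dagger (U s) \<in> carrier_mat N N" "U s \<in> carrier_mat N N" "H s \<in> carrier_mat N N"
        using U_carrier[OF s] H_carrier[OF s] by auto
      have "dagger (U' s) = \<i> \<cdot>\<^sub>m (dagger (U s) * H s)"
        using c dagger_H[OF s] by (simp add: U'_def dagger_smult dagger_mult)
      then have "dagger (U' s) * U s + dagger (U s) * U' s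
          = \<i> \<cdot>\<^sub>m (dagger (U s) * H s * U s) + (- \<i>) \<cdot>\<^sub>m (dagger (U s) * (H s * U s))"
        by (simp add: U'_def mult_smult_assoc_mat[OF c(1) c(4)] mult_smult_distrib[OF c(3) c(2)])
      also have "\<dots> = 0\<^sub>m N N"
        by (simp only: assoc_mult_mat[OF c(3) c(5) c(4)]) (rule eq_matI, use c in auto)
      finally show ?thesis .
    qed
    ultimately show ?thesis by simp
  qed
  then have "(dagger (U t) * U t) $$ (i,j) = (dagger (U 0) * U 0) $$ (i,j)" if "i < N" "j < N" for i j
    using t that by (intro mat_has_derivative_zero_constant[OF convex_real_interval(5)]) auto
  then show ?thesis
    using U_carrier[OF t] by (intro eq_matI) (auto simp: U_0)
qed

definition evolve :: "complex mat \<Rightarrow> real \<Rightarrow> complex mat" where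
  "evolve \<rho> t = U t * \<rho> * dagger (U t)"

definition velocity :: "complex mat \<Rightarrow> real \<Rightarrow> complex mat" where
  "velocity \<rho> t = (- \<i>) \<cdot>\<^sub>m (H t * evolve \<rho> t - evolve \<rho> t * H t)"

context
  fixes \<rho> :: "complex mat"
  assumes \<rho>: "\<rho> \<in> carrier_mat N N"
begin

lemma evolve_carrier: "t \<in> {0..T} \<Longrightarrow> evolve \<rho> t \<in> carrier_mat N N"
  using U_carrier[of t] \<rho> unfolding evolve_def
  by (metis dagger_carrier_mat mult_carrier_mat)

lemma evolve_0: "evolve \<rho> 0 = \<rho>"
  using \<rho> by (simp add: evolve_def U_0)

lemma dagger_evolve:
  assumes t: "t \<in> {0..T}" and "dagger \<rho> = \<rho>"
  shows "dagger (evolve \<rho> t) = evolve \<rho> t"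
proof -
  have c: "U t \<in> carrier_mat N N" "U t * \<rho> \<in> carrier_mat N N" "dagger (U t) \<in> carrier_mat N N"
    using U_carrier[OF t] \<rho> by auto
  have "dagger (evolve \<rho> t) = dagger (dagger (U t)) * dagger (U t * \<rho>)"
    unfolding evolve_def by (rule dagger_mult[OF c(2) c(3)])
  also have "\<dots> = U t * (\<rho> * dagger (U t))"
    using dagger_mult[OF c(1) \<rho>] assms(2) by simp
  also have "\<dots> = evolve \<rho> t"
    unfolding evolve_def by (rule assoc_mult_mat[OF c(1) \<rho> c(3), symmetric])
  finally show ?thesis .
qed

lemma mtrace_conj_unitary:
  assumes t: "t \<in> {0..T}" and A: "A \<in> carrier_mat N N"
  shows "mtrace (U t * A * dagger (U t)) = mtrace A"
proof -
  have c: "U t \<in> carrier_mat N N" "U t * A \<in> carrier_mat N N" "dagger (U t) \<in> carrier_mat N N"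
    using U_carrier[OF t] A by auto
  have "mtrace (U t * A * dagger (U t)) = mtrace (dagger (U t) * (U t * A))"
    by (rule mtrace_mult_comm[OF c(2) c(3)])
  also have "\<dots> = mtrace (dagger (U t) * U t * A)" by (simp only: assoc_mult_mat[OF c(3) c(1) A])
  finally show ?thesis using U_unitary[OF t] A by simp
qed

lemma mtrace_evolve: "t \<in> {0..T} \<Longrightarrow> mtrace (evolve \<rho> t) = mtrace \<rho>"
  unfolding evolve_def by (rule mtrace_conj_unitary[OF _ \<rho>])

lemma mtrace_evolve_square:
  assumes t: "t \<in> {0..T}"
  shows "mtrace (evolve \<rho> t * evolve \<rho> t) = mtrace (\<rho> * \<rho>)"
proof -
  note assoc = assoc_mult_mat[of _ N N _ N _ N]
  have c: "U t \<in> carrier_mat N N" "U t * \<rho> \<in> carrier_mat N N" "dagger (U t) \<in> carrier_mat N N"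
    "\<rho> * dagger (U t) \<in> carrier_mat N N" "dagger (U t) * U t \<in> carrier_mat N N"
    using U_carrier[OF t] \<rho> by auto
  have "evolve \<rho> t * evolve \<rho> t = (U t * \<rho>) * (dagger (U t) * (U t * \<rho> * dagger (U t)))"
    unfolding evolve_def by (rule assoc[OF c(2) c(3) evolve_carrier[OF t, unfolded evolve_def]])
  also have "dagger (U t) * (U t * \<rho> * dagger (U t)) = (dagger (U t) * U t) * (\<rho> * dagger (U t))"
    by (simp only: assoc[OF c(3) c(2) c(3), symmetric] assoc[OF c(3) c(1) \<rho>, symmetric] assoc[OF c(5) \<rho> c(3)])
  also have "\<dots> = \<rho> * dagger (U t)" using U_unitary[OF t] left_mult_one_mat[OF c(4)] by simp
  also have "U t * \<rho> * (\<rho> * dagger (U t)) = U t * (\<rho> * \<rho>) * dagger (U t)"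
    by (simp only: assoc[OF c(2) \<rho> c(3), symmetric] assoc[OF c(1) \<rho> \<rho>])
  finally show ?thesis using mtrace_conj_unitary[OF t] \<rho> by simp
qed

lemma velocity_carrier: "t \<in> {0..T} \<Longrightarrow> velocity \<rho> t \<in> carrier_mat N N"
  using evolve_carrier[of t] H_carrier[of t] by (simp add: velocity_def minus_carrier_mat)

lemma evolve_has_derivative:
  assumes t: "t \<in> {0..T}"
  shows "mat_has_derivative N {0..T} (evolve \<rho>) (velocity \<rho> t) t"
proof -
  note assoc = assoc_mult_mat[of _ N N _ N _ N]
  define U' where "U' = (- \<i>) \<cdot>\<^sub>m (H t * U t)"
  have c: "U t \<in> carrier_mat N N" "dagger (U t) \<in> carrier_mat N N" "H t \<in> carrier_mat N N"
    "U' \<in> carrier_mat N N" "H t * U t \<in> carrier_mat N N" "U t * \<rho> \<in> carrier_mat N N"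
    "U' * \<rho> \<in> carrier_mat N N" "dagger (U t) * H t \<in> carrier_mat N N"
    "evolve \<rho> t \<in> carrier_mat N N"
    using U_carrier[OF t] H_carrier[OF t] evolve_carrier[OF t] \<rho> by (auto simp: U'_def)
  have carriers: "\<forall>s\<in>{0..T}. U s \<in> carrier_mat N N" "\<forall>s\<in>{0..T}. U s * \<rho> \<in> carrier_mat N N"
    "\<forall>s\<in>{0..T}. dagger (U s) \<in> carrier_mat N N" "\<forall>s\<in>{0..T}. \<rho> \<in> carrier_mat N N"
    using U_carrier \<rho> mult_carrier_mat dagger_carrier_mat by blast+
  note dU = U_has_derivative[OF t, folded U'_def]
  have "mat_has_derivative N {0..T} (\<lambda>s. U s * \<rho>) (U' * \<rho> + U t * 0\<^sub>m N N) t"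
    by (rule mat_has_derivative_mult[OF carriers(1,4) c(4) _ t dU mat_has_derivative_const]) simp
  moreover have "U' * \<rho> + U t * 0\<^sub>m N N = U' * \<rho>"
    using right_mult_zero_mat[OF c(1), of N] right_add_zero_mat[OF c(7)] by simp
  ultimately have "mat_has_derivative N {0..T} (\<lambda>s. U s * \<rho>) (U' * \<rho>) t" by simp
  then have "mat_has_derivative N {0..T} (\<lambda>s. U s * \<rho> * dagger (U s))
      (U' * \<rho> * dagger (U t) + U t * \<rho> * dagger U') t"
    by (rule mat_has_derivative_mult[OF carriers(2,3) c(7) dagger_carrier_mat[OF c(4)] t _
          mat_has_derivative_dagger[OF carriers(1) c(4) t dU]])
  moreover have "U' * \<rho> * dagger (U t) = (- \<i>) \<cdot>\<^sub>m (H t * evolve \<rho> t)"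
  proof -
    have "U' * \<rho> * dagger (U t) = (- \<i>) \<cdot>\<^sub>m (H t * U t * \<rho> * dagger (U t))"
      unfolding U'_def
      by (simp only: mult_smult_assoc_mat[OF c(5) \<rho>] mult_smult_assoc_mat[OF mult_carrier_mat[OF c(5) \<rho>] c(2)])
    also have "H t * U t * \<rho> * dagger (U t) = H t * evolve \<rho> t"
      unfolding evolve_def by (simp only: assoc[OF c(3) c(1) \<rho>] assoc[OF c(3) c(6) c(2)])
    finally show ?thesis .
  qed
  moreover have "U t * \<rho> * dagger U' = \<i> \<cdot>\<^sub>m (evolve \<rho> t * H t)"
  proof -
    have "dagger U' = \<i> \<cdot>\<^sub>m (dagger (U t) * H t)"
      using c dagger_H[OF t] by (simp add: U'_def dagger_smult dagger_mult)
    then have "U t * \<rho> * dagger U' = \<i> \<cdot>\<^sub>m (U t * \<rho> * (dagger (U t) * H t))"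
      using mult_smult_distrib[OF c(6) c(8)] by simp
    also have "U t * \<rho> * (dagger (U t) * H t) = evolve \<rho> t * H t"
      unfolding evolve_def by (simp only: assoc[OF c(6) c(2) c(3)])
    finally show ?thesis .
  qed
  moreover have "(- \<i>) \<cdot>\<^sub>m (H t * evolve \<rho> t) + \<i> \<cdot>\<^sub>m (evolve \<rho> t * H t) = velocity \<rho> t"
    unfolding velocity_def using c by (intro eq_matI) (auto simp: right_diff_distrib)
  moreover have "(\<lambda>s. U s * \<rho> * dagger (U s)) = evolve \<rho>" by (simp add: evolve_def fun_eq_iff)
  ultimately show ?thesis by simp
qed

lemma dagger_velocity:
  assumes t: "t \<in> {0..T}" and "dagger \<rho> = \<rho>"
  shows "dagger (velocity \<rho> t) = velocity \<rho> t"
proof -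
  have c: "H t \<in> carrier_mat N N" "evolve \<rho> t \<in> carrier_mat N N"
    "H t * evolve \<rho> t \<in> carrier_mat N N" "evolve \<rho> t * H t \<in> carrier_mat N N"
    using evolve_carrier[OF t] H_carrier[OF t] by auto
  have "dagger (velocity \<rho> t) = \<i> \<cdot>\<^sub>m (dagger (H t * evolve \<rho> t) - dagger (evolve \<rho> t * H t))"
    unfolding velocity_def by (simp add: dagger_smult dagger_minus[OF c(3,4)])
  also have "\<dots> = \<i> \<cdot>\<^sub>m (evolve \<rho> t * H t - H t * evolve \<rho> t)"
    using dagger_mult[OF c(1,2)] dagger_mult[OF c(2,1)] dagger_evolve[OF assms] dagger_H[OF t] by simp
  also have "\<dots> = velocity \<rho> t"
    unfolding velocity_def by (rule eq_matI) (use c in \<open>auto simp: right_diff_distrib\<close>)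
  finally show ?thesis .
qed

lemma mtrace_velocity:
  assumes t: "t \<in> {0..T}"
  shows "mtrace (velocity \<rho> t) = 0"
proof -
  have c: "H t \<in> carrier_mat N N" "evolve \<rho> t \<in> carrier_mat N N"
    "H t * evolve \<rho> t \<in> carrier_mat N N" "evolve \<rho> t * H t \<in> carrier_mat N N"
    using evolve_carrier[OF t] H_carrier[OF t] by auto
  show ?thesis
    unfolding velocity_def
    by (simp add: mtrace_smult[OF minus_carrier_mat[OF c(4)]] mtrace_minus[OF c(3,4)] mtrace_mult_comm[OF c(1,2)])
qed

lemma mtrace_evolve_velocity:
  assumes t: "t \<in> {0..T}"
  shows "mtrace (evolve \<rho> t * velocity \<rho> t) = 0"
proof -
  define P where "P = evolve \<rho> t"
  have c: "P \<in> carrier_mat N N" "H t \<in> carrier_mat N N" "H t * P \<in> carrier_mat N N"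
    "P * H t \<in> carrier_mat N N" "P * P \<in> carrier_mat N N"
    "P * (H t * P) \<in> carrier_mat N N" "P * (P * H t) \<in> carrier_mat N N"
    using evolve_carrier[OF t] H_carrier[OF t] by (auto simp: P_def)
  have "P * velocity \<rho> t = (- \<i>) \<cdot>\<^sub>m (P * (H t * P) - P * (P * H t))"
    unfolding velocity_def P_def[symmetric]
    by (simp add: mult_smult_distrib[OF c(1) minus_carrier_mat[OF c(4)]] mult_minus_distrib_mat[OF c(1,3,4)])
  moreover have "mtrace (P * (H t * P)) = mtrace (H t * (P * P))"
    using mtrace_mult_comm[OF c(1,3)] assoc_mult_mat[OF c(2,1,1)] by simp
  moreover have "mtrace (P * (P * H t)) = mtrace (H t * (P * P))"
    using mtrace_mult_comm[OF c(5,2)] assoc_mult_mat[OF c(1,1,2)] by simp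
  ultimately show ?thesis
    unfolding P_def[symmetric] by (simp add: mtrace_smult[OF minus_carrier_mat[OF c(7)]] mtrace_minus[OF c(6,7)])
qed

lemma frob_inner_velocity_self:
  assumes t: "t \<in> {0..T}" and "dagger \<rho> = \<rho>"
  shows "frob_inner N (velocity \<rho> t) (velocity \<rho> t)
    = 2 * Re (mtrace (evolve \<rho> t * evolve \<rho> t * H t * H t
                      - (evolve \<rho> t * H t) * (evolve \<rho> t * H t)))"
proof -
  define K where "K = H t * evolve \<rho> t - evolve \<rho> t * H t"
  have K: "K \<in> carrier_mat N N" "K * K \<in> carrier_mat N N"
    using evolve_carrier[OF t] H_carrier[OF t] by (auto simp: K_def minus_carrier_mat)
  have "velocity \<rho> t * velocity \<rho> t = (- \<i>) \<cdot>\<^sub>m ((- \<i>) \<cdot>\<^sub>m (K * K))"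
    unfolding velocity_def K_def[symmetric]
    by (simp add: mult_smult_assoc_mat[OF K(1) smult_carrier_mat[OF K(1)]] mult_smult_distrib[OF K(1) K(1)])
  then have "mtrace (velocity \<rho> t * velocity \<rho> t) = - mtrace (K * K)"
    by (simp add: mtrace_smult[OF smult_carrier_mat[OF K(2)]] mtrace_smult[OF K(2)])
  then show ?thesis
    unfolding frob_inner_eq_Re_mtrace[OF velocity_carrier[OF t] velocity_carrier[OF t] dagger_velocity[OF assms]]
    by (simp add: K_def mtrace_commutator_square[OF evolve_carrier[OF t] H_carrier[OF t]])
qed

lemma velocity_continuous_on:
  assumes "\<forall>i<N. \<forall>j<N. continuous_on {0..T} (\<lambda>t. H t $$ (i,j))"
  shows "mat_continuous_on N {0..T} (velocity \<rho>)"
proof -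
  have H: "mat_continuous_on N {0..T} H" using assms by (simp add: mat_continuous_on_def)
  have P: "mat_continuous_on N {0..T} (evolve \<rho>)"
    by (rule mat_has_derivative_imp_continuous_on[where A'="velocity \<rho>"])
      (use evolve_has_derivative in blast)
  have carriers: "\<forall>s\<in>{0..T}. H s \<in> carrier_mat N N" "\<forall>s\<in>{0..T}. evolve \<rho> s \<in> carrier_mat N N"
    "\<forall>s\<in>{0..T}. H s * evolve \<rho> s - evolve \<rho> s * H s \<in> carrier_mat N N"
    using H_carrier evolve_carrier mult_carrier_mat minus_carrier_mat by blast+
  have "mat_continuous_on N {0..T} (\<lambda>s. H s * evolve \<rho> s - evolve \<rho> s * H s)"
    using carriers by (intro mat_continuous_on_minus mat_continuous_on_mult H P) auto
  then show ?thesis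
    unfolding velocity_def[abs_def] by (rule mat_continuous_on_smult[OF carriers(3)])
qed

end

end

locale speed_limit = hamiltonian_evolution +
  fixes \<rho> :: "complex mat"
  assumes N_pos: "N \<ge> 1" and T_nonneg: "0 \<le> T"
    and hermitian_\<rho>: "hermitian N \<rho>" and mtrace_\<rho>: "mtrace \<rho> = 1"
    and not_maximally_mixed: "\<rho> \<noteq> (1 / of_nat N) \<cdot>\<^sub>m 1\<^sub>m N"
    and continuous_H: "\<forall>i<N. \<forall>j<N. continuous_on {0..T} (\<lambda>t. H t $$ (i,j))"
begin

lemma \<rho>_carrier: "\<rho> \<in> carrier_mat N N" and dagger_\<rho>: "dagger \<rho> = \<rho>"
  using hermitian_\<rho> by (auto simp: hermitian_def)

definition purity_gap :: real where
  "purity_gap = Re (mtrace (\<rho> * \<rho>)) - 1 / real N"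

definition bloch_cos :: "real \<Rightarrow> real" where
  "bloch_cos t = (Re (mtrace (\<rho> * evolve \<rho> t)) - 1 / real N) / purity_gap"

definition bloch_speed :: "real \<Rightarrow> real" where
  "bloch_speed t = sqrt (2 * Re (mtrace (evolve \<rho> t * evolve \<rho> t * H t * H t
        - (evolve \<rho> t * H t) * (evolve \<rho> t * H t)))
      / Re (mtrace (evolve \<rho> t * evolve \<rho> t - (1 / (of_nat N)^2) \<cdot>\<^sub>m 1\<^sub>m N)))"

lemma purity_gap_pos: "purity_gap > 0"
  unfolding purity_gap_def
  by (rule purity_gt_maximally_mixed[OF hermitian_\<rho> mtrace_\<rho> N_pos not_maximally_mixed])

lemma frob_inner_bloch_vectors:
  assumes t: "t \<in> {0..T}"
  defines "X\<^sub>0 \<equiv> \<rho> - of_real (1 / real N) \<cdot>\<^sub>m 1\<^sub>m N"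
    and "X\<^sub>t \<equiv> evolve \<rho> t - of_real (1 / real N) \<cdot>\<^sub>m 1\<^sub>m N"
  shows "frob_inner N X\<^sub>0 X\<^sub>0 = purity_gap" and "frob_inner N X\<^sub>t X\<^sub>t = purity_gap"
    and "frob_inner N X\<^sub>0 X\<^sub>t = purity_gap * bloch_cos t"
    and "frob_inner N X\<^sub>t (velocity \<rho> t) = 0"
    and "frob_inner N X\<^sub>0 (velocity \<rho> t) = Re (mtrace (\<rho> * velocity \<rho> t))"
proof -
  note P = evolve_carrier[OF \<rho>_carrier t] dagger_evolve[OF \<rho>_carrier t dagger_\<rho>]
    mtrace_evolve[OF \<rho>_carrier t]
  note V = velocity_carrier[OF \<rho>_carrier t] dagger_velocity[OF \<rho>_carrier t dagger_\<rho>]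
    mtrace_velocity[OF \<rho>_carrier t]
  show "frob_inner N X\<^sub>0 X\<^sub>0 = purity_gap"
    unfolding X\<^sub>0_def purity_gap_def
    by (rule frob_inner_traceless_states[OF \<rho>_carrier \<rho>_carrier dagger_\<rho> dagger_\<rho> mtrace_\<rho> mtrace_\<rho> N_pos])
  show "frob_inner N X\<^sub>t X\<^sub>t = purity_gap"
    using frob_inner_traceless_states[OF P(1) P(1) P(2) P(2)] P(3) mtrace_\<rho> N_pos
      mtrace_evolve_square[OF \<rho>_carrier t]
    by (simp add: X\<^sub>t_def purity_gap_def)
  show "frob_inner N X\<^sub>0 X\<^sub>t = purity_gap * bloch_cos t"
    using frob_inner_traceless_states[OF \<rho>_carrier P(1) dagger_\<rho> P(2)] P(3) mtrace_\<rho> N_pos purity_gap_pos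
    by (simp add: X\<^sub>0_def X\<^sub>t_def bloch_cos_def)
  show "frob_inner N X\<^sub>t (velocity \<rho> t) = 0"
    unfolding X\<^sub>t_def frob_inner_shift_traceless[OF P(1) V]
    by (rule mtrace_evolve_velocity[OF \<rho>_carrier t, THEN arg_cong[where f=Re], simplified])
  show "frob_inner N X\<^sub>0 (velocity \<rho> t) = Re (mtrace (\<rho> * velocity \<rho> t))"
    unfolding X\<^sub>0_def by (rule frob_inner_shift_traceless[OF \<rho>_carrier V])
qed

lemma abs_bloch_cos_le_1:
  assumes t: "t \<in> {0..T}"
  shows "\<bar>bloch_cos t\<bar> \<le> 1"
proof -
  have "(purity_gap * bloch_cos t)\<^sup>2 \<le> purity_gap * purity_gap"
    using frob_inner_Cauchy_Schwarz[of N "\<rho> - of_real (1 / real N) \<cdot>\<^sub>m 1\<^sub>m N"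
        "evolve \<rho> t - of_real (1 / real N) \<cdot>\<^sub>m 1\<^sub>m N"]
      frob_inner_bloch_vectors[OF t] by simp
  then have "purity_gap\<^sup>2 * (bloch_cos t)\<^sup>2 \<le> purity_gap\<^sup>2 * 1"
    by (metis power2_eq_square power_mult_distrib mult_1_right)
  then have "(bloch_cos t)\<^sup>2 \<le> 1"
    by (rule mult_left_le_imp_le) (use purity_gap_pos in simp)
  then show ?thesis by (simp add: abs_square_le_1)
qed

lemma bloch_cos_has_derivative:
  assumes t: "t \<in> {0..T}"
  shows "(bloch_cos has_real_derivative Re (mtrace (\<rho> * velocity \<rho> t)) / purity_gap)
    (at t within {0..T})"
proof -
  have carriers: "\<forall>s\<in>{0..T}. \<rho> \<in> carrier_mat N N" "\<forall>s\<in>{0..T}. evolve \<rho> s \<in> carrier_mat N N"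
    using \<rho>_carrier evolve_carrier[OF \<rho>_carrier] by auto
  have V: "velocity \<rho> t \<in> carrier_mat N N" using velocity_carrier[OF \<rho>_carrier t] .
  have "mat_has_derivative N {0..T} (\<lambda>s. \<rho> * evolve \<rho> s) (0\<^sub>m N N * evolve \<rho> t + \<rho> * velocity \<rho> t) t"
    by (rule mat_has_derivative_mult[OF carriers zero_carrier_mat V t mat_has_derivative_const
          evolve_has_derivative[OF \<rho>_carrier t]])
  moreover have "0\<^sub>m N N * evolve \<rho> t + \<rho> * velocity \<rho> t = \<rho> * velocity \<rho> t"
    using evolve_carrier[OF \<rho>_carrier t] \<rho>_carrier V by simp
  ultimately have "((\<lambda>s. mtrace (\<rho> * evolve \<rho> s)) has_vector_derivative mtrace (\<rho> * velocity \<rho> t))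
      (at t within {0..T})"
    using \<rho>_carrier V evolve_carrier[OF \<rho>_carrier] t
    by (intro mtrace_has_vector_derivative[where n=N]) auto
  from has_field_derivative_Re[OF this]
  have "((\<lambda>s. (Re (mtrace (\<rho> * evolve \<rho> s)) - 1 / real N) / purity_gap) has_real_derivative
      (Re (mtrace (\<rho> * velocity \<rho> t)) - 0) / purity_gap) (at t within {0..T})"
    by (intro DERIV_cdivide DERIV_diff DERIV_const)
  then show ?thesis unfolding bloch_cos_def[abs_def] by simp
qed

lemma bloch_speed_eq:
  assumes t: "t \<in> {0..T}"
  shows "bloch_speed t = sqrt (frob_inner N (velocity \<rho> t) (velocity \<rho> t) / purity_gap)"
proof -
  have c: "evolve \<rho> t * evolve \<rho> t \<in> carrier_mat N N"
    "(1 / (of_nat N)^2) \<cdot>\<^sub>m 1\<^sub>m N \<in> carrier_mat N (N::nat)"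
    using evolve_carrier[OF \<rho>_carrier t] by auto
  have "Re (1 / (of_nat N)^2 * (of_nat N :: complex)) = 1 / real N"
    using N_pos by (simp add: power2_eq_square)
  then have "Re (mtrace (evolve \<rho> t * evolve \<rho> t - (1 / (of_nat N)^2) \<cdot>\<^sub>m 1\<^sub>m N)) = purity_gap"
    using mtrace_evolve_square[OF \<rho>_carrier t]
    by (simp add: mtrace_minus[OF c] mtrace_smult[OF one_carrier_mat] mtrace_one_mat purity_gap_def)
  then show ?thesis
    unfolding bloch_speed_def frob_inner_velocity_self[OF \<rho>_carrier t dagger_\<rho>] by simp
qed

lemma bloch_speed_continuous_on: "continuous_on {0..T} bloch_speed"
proof -
  have "continuous_on {0..T} (\<lambda>t. sqrt (frob_inner N (velocity \<rho> t) (velocity \<rho> t) / purity_gap))"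
    using continuous_on_frob_inner_self[OF velocity_continuous_on[OF \<rho>_carrier continuous_H]]
      purity_gap_pos
    by (intro continuous_intros) auto
  then show ?thesis by (rule continuous_on_eq) (simp add: bloch_speed_eq)
qed

lemma bloch_speed_nonneg: "t \<in> {0..T} \<Longrightarrow> 0 \<le> bloch_speed t"
  unfolding bloch_speed_eq using frob_inner_self_nonneg purity_gap_pos by simp

lemma bloch_cos_derivative_bound:
  assumes t: "t \<in> {0..T}"
  shows "\<bar>Re (mtrace (\<rho> * velocity \<rho> t)) / purity_gap\<bar> \<le> sqrt (1 - (bloch_cos t)\<^sup>2) * bloch_speed t"
proof -
  let ?X\<^sub>0 = "\<rho> - of_real (1 / real N) \<cdot>\<^sub>m 1\<^sub>m N" and ?X\<^sub>t = "evolve \<rho> t - of_real (1 / real N) \<cdot>\<^sub>m 1\<^sub>m N"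
    and ?v = "velocity \<rho> t" and ?r = purity_gap and ?g = "bloch_cos t"
  have "\<bar>Re (mtrace (\<rho> * ?v))\<bar> \<le> sqrt (?r - (?r * ?g)\<^sup>2 / ?r) * sqrt (frob_inner N ?v ?v)"
    using frob_inner_orthogonal_bound[of ?X\<^sub>0 N ?X\<^sub>t ?v] frob_inner_bloch_vectors[OF t]
      purity_gap_pos evolve_carrier[OF \<rho>_carrier t] \<rho>_carrier
    by (simp add: minus_carrier_mat)
  also have "sqrt (?r - (?r * ?g)\<^sup>2 / ?r) * sqrt (frob_inner N ?v ?v)
      = ?r * (sqrt (1 - ?g\<^sup>2) * sqrt (frob_inner N ?v ?v / ?r))"
  proof -
    have "?r - (?r * ?g)\<^sup>2 / ?r = ?r\<^sup>2 * ((1 - ?g\<^sup>2) / ?r)"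
      using purity_gap_pos by (simp add: field_simps power2_eq_square)
    then show ?thesis
      using purity_gap_pos by (simp add: real_sqrt_mult real_sqrt_divide)
  qed
  finally show ?thesis
    using purity_gap_pos by (simp add: bloch_speed_eq[OF t] divide_le_eq mult.commute)
qed

lemma Theta_evolve_le_integral: "Theta N \<rho> (evolve \<rho> T) \<le> integral {0..T} bloch_speed"
proof -
  have "bloch_cos 0 = 1"
    using purity_gap_pos by (simp add: bloch_cos_def evolve_0[OF \<rho>_carrier] purity_gap_def)
  then have "arccos (bloch_cos T) \<le> integral {0..T} bloch_speed"
    using bloch_speed_nonneg bloch_cos_has_derivative abs_bloch_cos_le_1 bloch_cos_derivative_bound
    by (intro arccos_le_integral[OF T_nonneg bloch_speed_continuous_on,
          where g' = "\<lambda>t. Re (mtrace (\<rho> * velocity \<rho> t)) / purity_gap"]) auto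
  then show ?thesis by (simp add: Theta_def bloch_cos_def purity_gap_def)
qed

end

theorem theorem1:
  fixes N :: nat and \<rho> \<sigma> :: "complex mat" and T :: real
    and H U :: "real \<Rightarrow> complex mat"
  assumes "N \<ge> 1"
    and "density_op N \<rho>" and "density_op N \<sigma>"
    and "same_spectrum \<rho> \<sigma>"
    and "\<rho> \<noteq> (1 / of_nat N) \<cdot>\<^sub>m 1\<^sub>m N"
    and "T > 0"
    and "\<forall>t\<in>{0..T}. hermitian N (H t)"
    and "\<forall>i<N. \<forall>j<N. continuous_on {0..T} (\<lambda>t. H t $$ (i,j))"
    and "generates N T H U"
    and "U T * \<rho> * dagger (U T) = \<sigma>"
  shows "T \<ge> Theta N \<rho> \<sigma> / QTheta N T H (\<lambda>t. U t * \<rho> * dagger (U t))"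
proof -
  interpret speed_limit N T H U \<rho>
    using assms(1,2,5-9) by unfold_locales (auto simp: density_op_def)
  have Theta: "Theta N \<rho> \<sigma> \<le> integral {0..T} bloch_speed"
    using Theta_evolve_le_integral assms(10) by (simp add: evolve_def)
  have Q: "QTheta N T H (\<lambda>t. U t * \<rho> * dagger (U t)) = integral {0..T} bloch_speed / T"
    by (simp add: QTheta_def bloch_speed_def[abs_def] evolve_def)
  have "0 \<le> integral {0..T} bloch_speed"
    using bloch_speed_continuous_on bloch_speed_nonneg
    by (intro integral_nonneg integrable_continuous_real) auto
  then show ?thesis
    using Theta assms(6) unfolding Q
    by (cases "integral {0..T} bloch_speed = 0") (auto simp: field_simps)
qed

end
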